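(* For every integer $n>0$, $\mathrm{DE1}(n)+\mathrm{DE1}(n-1)$ equals the number of partitions of $n$ into parts none of which is divisible by $4$.
   Context: For a nonnegative integer $n$, $\mathrm{DE1}(n)$ denotes the number of partitions of $n$ in which no even part is repeated and the largest part is odd (so the empty partition is not counted and $\mathrm{DE1}(0)=0$). Equivalently, $\sum_{n\ge0}\mathrm{DE1}(n)q^n=\sum_{n\ge0}\frac{(-q^2;q^2)_n q^{2n+1}}{(q;q^2)_{n+1}}$, where $(a;q)_n=\prod_{j=0}^{n-1}(1-aq^j)$. *)

theory Defs
  imports Main "HOL-Library.Multiset"
begin

definition is_partition :: "nat multiset \<Rightarrow> nat \<Rightarrow> bool" where
  "is_partition p n \<longleftrightarrow> (\<forall>x\<in>#p. 0 < x) \<and> sum_mset p = n"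

definition DE1 :: "nat \<Rightarrow> nat" where
  "DE1 n = card {p. is_partition p n \<and> (\<forall>x\<in>#p. even x \<longrightarrow> count p x \<le> 1)
                  \<and> p \<noteq> {#} \<and> odd (Max_mset p)}"

definition no4 :: "nat \<Rightarrow> nat" where
  "no4 n = card {p. is_partition p n \<and> (\<forall>x\<in>#p. \<not> 4 dvd x)}"

end

theory Submission
  imports Defs "HOL-Library.Nat_Bijection"
begin

text \<open>Keep the odd parts of a partition and cut every part divisible by 4 into two halves,
  repeatedly, until all parts are \<open>\<equiv> 2 (mod 4)\<close>; this is Glaisher's bijection applied to the
  halved even parts. It maps partitions of n without repeated even parts onto partitions of n
  into parts not divisible by 4: the part \<open>x * 2^i\<close> (\<open>x \<equiv> 2 mod 4\<close>) contributes \<open>2^i\<close> copies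
  of x, so the multiplicity of x encodes in binary the set of exponents i present, and the map
  is inverted by merging equal even parts like binary carries.
  Among partitions of \<open>n > 0\<close> without repeated even parts, those with odd largest part are
  counted by \<open>DE1 n\<close>; an even largest part occurs once, and lowering it by one is a bijection
  onto the partitions of \<open>n - 1\<close> counted by \<open>DE1 (n - 1)\<close>.\<close>

function split_part :: "nat \<Rightarrow> nat multiset" where
  "split_part y =
     (if 0 < y \<and> 4 dvd y then split_part (y div 2) + split_part (y div 2) else {#y#})"
  by auto
termination by (relation "measure id") auto

declare split_part.simps [simp del]

lemma split_part_0 [simp]: "split_part 0 = {#0#}"
  by (simp add: split_part.simps)

lemma split_part_not_dvd4: "\<not> 4 dvd y \<Longrightarrow> split_part y = {#y#}"
  by (simp add: split_part.simps)

lemma split_part_double: "0 < y \<Longrightarrow> even y \<Longrightarrow> split_part (2 * y) = split_part y + split_part y"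
  by (subst split_part.simps) auto

lemma split_part_times_pow2:
  assumes "x mod 4 = (2::nat)"
  shows "split_part (x * 2 ^ i) = replicate_mset (2 ^ i) x"
proof (induction i)
  case 0
  from assms show ?case by (simp add: split_part_not_dvd4 dvd_eq_mod_eq_0)
next
  case (Suc i)
  from assms have "0 < x * 2 ^ i" "even (x * 2 ^ i)"
    by (auto intro!: Nat.gr0I) presburger
  then have "split_part (x * 2 ^ Suc i) = split_part (x * 2 ^ i) + split_part (x * 2 ^ i)"
    using split_part_double[of "x * 2 ^ i"] by (simp add: ac_simps)
  with Suc.IH show ?case
    by (auto intro: multiset_eqI)
qed

lemma mod_4_eq_2D:
  fixes x :: nat
  assumes "x mod 4 = 2"
  shows "0 < x" "even x" "\<not> 4 dvd x"
  using assms by presburger+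

lemma obtain_mod_4_eq_2_times_pow2:
  fixes y :: nat
  assumes "0 < y" "even y"
  obtains x i where "x mod 4 = 2" "y = x * 2 ^ i"
  using assms
proof (induction y arbitrary: thesis rule: less_induct)
  case (less y)
  show ?case
  proof (cases "y mod 4 = 2")
    case True
    then show ?thesis by (intro less.prems(1)[of y 0]) auto
  next
    case False
    with less.prems(2,3) have "y div 2 < y" "0 < y div 2" "even (y div 2)" "y = 2 * (y div 2)"
      by presburger+
    then show ?thesis
      using less.IH[of "y div 2"] less.prems(1)[of _ "Suc _"] by (metis mult.left_commute power_Suc)
  qed
qed

lemma split_part_cases:
  obtains "split_part y = {#y#}" "\<not> 4 dvd y \<or> y = 0"
  | x i where "0 < y" "even y" "x mod 4 = 2" "y = x * 2 ^ i"
      "split_part y = replicate_mset (2 ^ i) x"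
proof (cases "0 < y \<and> even y")
  case True
  then obtain x i where "x mod 4 = 2" "y = x * 2 ^ i"
    by (blast elim: obtain_mod_4_eq_2_times_pow2)
  with True show ?thesis
    using that(2) split_part_times_pow2 by blast
next
  case False
  then have "\<not> 4 dvd y \<or> y = 0" by presburger
  with that(1) show ?thesis
    using split_part_0 split_part_not_dvd4 by blast
qed

lemma sum_mset_split_part [simp]: "sum_mset (split_part y) = y"
  by (cases y rule: split_part_cases) simp_all

lemma set_mset_split_part: "x \<in># split_part y \<Longrightarrow> 0 < y \<Longrightarrow> 0 < x \<and> \<not> 4 dvd x"
  by (cases y rule: split_part_cases) (auto split: if_splits simp: dvd_eq_mod_eq_0 intro!: Nat.gr0I)

lemma count_split_part_odd_or_0:
  "odd x \<or> x = 0 \<Longrightarrow> count (split_part y) x = (if y = x then 1 else 0)"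
  by (cases y rule: split_part_cases) (auto dest: mod_4_eq_2D)

lemma count_split_part_not_times_pow2:
  assumes "\<And>i. y \<noteq> x * 2 ^ i"
  shows "count (split_part y) x = 0"
proof (cases y rule: split_part_cases)
  case 1
  moreover have "y \<noteq> x" using assms[of 0] by simp
  ultimately show ?thesis by simp
next
  case (2 x' i)
  then have "x' \<noteq> x" using assms[of i] by blast
  with 2 show ?thesis by simp
qed

definition glaisher :: "nat multiset \<Rightarrow> nat multiset" where
  "glaisher q = \<Sum>\<^sub># (image_mset split_part q)"

lemma glaisher_empty [simp]: "glaisher {#} = {#}"
  by (simp add: glaisher_def)

lemma glaisher_add_mset [simp]: "glaisher (add_mset z q) = split_part z + glaisher q"
  by (simp add: glaisher_def)

lemma sum_mset_glaisher [simp]: "sum_mset (glaisher q) = sum_mset q"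
  by (induction q) simp_all

lemma set_mset_glaisher: "x \<in># glaisher q \<Longrightarrow> 0 \<notin># q \<Longrightarrow> 0 < x \<and> \<not> 4 dvd x"
proof (induction q)
  case (add z q)
  then show ?case
    using set_mset_split_part[of x z] by (cases "x \<in># split_part z") auto
qed simp

lemma count_glaisher_odd_or_0: "odd x \<or> x = 0 \<Longrightarrow> count (glaisher q) x = count q x"
  by (induction q) (auto simp: count_split_part_odd_or_0)

definition distinct_even_parts :: "nat multiset \<Rightarrow> bool" where
  "distinct_even_parts q \<longleftrightarrow> (\<forall>x\<in>#q. even x \<longrightarrow> count q x \<le> 1)"

lemma distinct_even_parts_empty [simp]: "distinct_even_parts {#}"
  by (simp add: distinct_even_parts_def)

lemma distinct_even_parts_add_mset [simp]:
  "distinct_even_parts (add_mset z q) \<longleftrightarrow> distinct_even_parts q \<and> (even z \<longrightarrow> z \<notin># q)"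
  unfolding distinct_even_parts_def by (force simp: not_in_iff)

lemma count_distinct_even_parts:
  "distinct_even_parts q \<Longrightarrow> even x \<Longrightarrow> count q x = (if x \<in># q then 1 else 0)"
proof (cases "x \<in># q")
  case True
  moreover assume "distinct_even_parts q" "even x"
  ultimately have "count q x \<le> 1"
    by (simp add: distinct_even_parts_def)
  moreover have "0 < count q x"
    using True by simp
  ultimately have "count q x = 1"
    by linarith
  with True show ?thesis by simp
qed (simp add: not_in_iff)

lemma finite_exponents:
  assumes "0 < (x::nat)"
  shows "finite {i. x * 2 ^ i \<in># q}"
proof -
  have "inj (\<lambda>i::nat. x * 2 ^ i)"
    using assms by (auto simp: inj_on_def)
  then have "finite ((\<lambda>i. x * 2 ^ i) -` set_mset q)"
    by (simp add: finite_vimageI)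
  then show ?thesis by (simp add: vimage_def)
qed

lemma count_glaisher_mod_4_eq_2:
  assumes "distinct_even_parts q" "x mod 4 = 2"
  shows "count (glaisher q) x = set_encode {i. x * 2 ^ i \<in># q}"
  using assms(1)
proof (induction q)
  case (add z q)
  have IH: "count (glaisher q) x = set_encode {i. x * 2 ^ i \<in># q}"
    using add by simp
  show ?case
  proof (cases "\<exists>i. z = x * 2 ^ i")
    case True
    then obtain i where z: "z = x * 2 ^ i" by blast
    then have "even z"
      using mod_4_eq_2D(2)[OF assms(2)] by simp
    with add.prems have "z \<notin># q" by simp
    with z have "i \<notin> {i. x * 2 ^ i \<in># q}" by simp
    moreover have "{j. x * 2 ^ j \<in># add_mset z q} = insert i {j. x * 2 ^ j \<in># q}"
      using z mod_4_eq_2D(1)[OF assms(2)] by auto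
    ultimately show ?thesis
      using IH z finite_exponents[OF mod_4_eq_2D(1)[OF assms(2)]]
      by (simp add: split_part_times_pow2[OF assms(2)])
  next
    case False
    then have "{j. x * 2 ^ j \<in># add_mset z q} = {j. x * 2 ^ j \<in># q}" by auto
    with False IH show ?thesis
      by (simp add: count_split_part_not_times_pow2)
  qed
qed simp

lemma inj_on_glaisher: "inj_on glaisher {q. distinct_even_parts q}"
proof (rule inj_onI, rule multiset_eqI)
  fix q1 q2 y
  assume q1: "q1 \<in> {q. distinct_even_parts q}" and q2: "q2 \<in> {q. distinct_even_parts q}"
    and eq: "glaisher q1 = glaisher q2"
  show "count q1 y = count q2 y"
  proof (cases "0 < y \<and> even y")
    case True
    then obtain x i where x: "x mod 4 = 2" "y = x * 2 ^ i"
      by (blast elim: obtain_mod_4_eq_2_times_pow2)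
    have "set_encode {i. x * 2 ^ i \<in># q1} = set_encode {i. x * 2 ^ i \<in># q2}"
      using eq q1 q2 by (simp flip: count_glaisher_mod_4_eq_2[OF _ x(1)])
    then have "{i. x * 2 ^ i \<in># q1} = {i. x * 2 ^ i \<in># q2}"
      by (simp add: set_encode_eq finite_exponents mod_4_eq_2D(1)[OF x(1)])
    then have "y \<in># q1 \<longleftrightarrow> y \<in># q2"
      using x(2) by blast
    with True q1 q2 show ?thesis
      by (simp add: count_distinct_even_parts)
  next
    case False
    then have "odd y \<or> y = 0" by auto
    with eq show ?thesis
      by (metis count_glaisher_odd_or_0)
  qed
qed

lemma glaisher_add_split_part:
  assumes "distinct_even_parts q" "0 < y"
  obtains q' where "distinct_even_parts q'" "glaisher q' = glaisher q + split_part y"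
  using assms
proof (induction "size q" arbitrary: q y thesis rule: less_induct)
  case less
  show ?case
  proof (cases "even y \<and> y \<in># q")
    case True
    then obtain r where q: "q = add_mset y r"
      by (metis insert_DiffM)
    \<comment> \<open>binary carry: y is already a part, so the two copies of y merge into 2y\<close>
    with less.prems(2) obtain q' where "distinct_even_parts q'"
      "glaisher q' = glaisher r + split_part (2 * y)"
      using less.hyps[of r "2 * y"] less.prems(3) by auto
    moreover have "split_part (2 * y) = split_part y + split_part y"
      using True less.prems(3) by (simp add: split_part_double)
    ultimately show ?thesis
      using less.prems(1) q by (simp add: ac_simps)
  next
    case False
    with less.prems show ?thesis
      by (metis add.commute distinct_even_parts_add_mset glaisher_add_mset)
  qed
qed

lemma glaisher_surj:
  assumes "\<forall>x\<in>#p. \<not> 4 dvd x"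
  obtains q where "distinct_even_parts q" "glaisher q = p"
  using assms
proof (induction p arbitrary: thesis)
  case empty
  then show ?case
    using distinct_even_parts_empty glaisher_empty by blast
next
  case (add x p)
  then obtain q where "distinct_even_parts q" "glaisher q = p" by auto
  moreover have "0 < x" "split_part x = {#x#}"
    using add.prems(2) by (auto intro: Nat.gr0I simp: split_part_not_dvd4)
  ultimately show ?case
    using add.prems(1) by (metis add_mset_add_single glaisher_add_split_part)
qed

lemma size_le_sum_mset: "\<forall>x\<in>#p. 0 < x \<Longrightarrow> size p \<le> sum_mset (p :: nat multiset)"
  by (induction p) force+

lemma finite_partitions: "finite {p. is_partition p n}"
proof (rule finite_subset)
  show "{p. is_partition p n} \<subseteq> (\<Union>k\<le>n. multisets_of_size {1..n} k)"
  proof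
    fix p assume "p \<in> {p. is_partition p n}"
    then have pos: "\<forall>x\<in>#p. 0 < x" and sum: "sum_mset p = n"
      by (auto simp: is_partition_def)
    have "size p \<le> n"
      using size_le_sum_mset[OF pos] sum by simp
    moreover have "set_mset p \<subseteq> {1..n}"
      using pos sum sum_mset.remove by fastforce
    ultimately show "p \<in> (\<Union>k\<le>n. multisets_of_size {1..n} k)"
      by (auto simp: multisets_of_size_def)
  qed
qed auto

lemma Max_mset_add_mset_ge: "(\<And>x. x \<in># r \<Longrightarrow> x \<le> a) \<Longrightarrow> Max_mset (add_mset a r) = a"
  by (rule Max_eqI) auto

definition raise_max :: "nat multiset \<Rightarrow> nat multiset" where
  "raise_max p = add_mset (Max_mset p + 1) (p - {#Max_mset p#})"

definition lower_max :: "nat multiset \<Rightarrow> nat multiset" where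
  "lower_max p = add_mset (Max_mset p - 1) (p - {#Max_mset p#})"

lemma raise_max_not_empty [simp]: "raise_max p \<noteq> {#}"
  and lower_max_not_empty [simp]: "lower_max p \<noteq> {#}"
  by (simp_all add: raise_max_def lower_max_def)

lemma Max_mset_raise_max: "Max_mset (raise_max p) = Max_mset p + 1"
proof -
  have "x \<le> Max_mset p + 1" if "x \<in># p - {#Max_mset p#}" for x
    using in_diffD[OF that] by (simp add: le_SucI)
  then show ?thesis
    unfolding raise_max_def by (rule Max_mset_add_mset_ge)
qed

lemma lower_max_raise_max: "p \<noteq> {#} \<Longrightarrow> lower_max (raise_max p) = p"
  unfolding lower_max_def Max_mset_raise_max by (simp add: raise_max_def)

lemma
  assumes "p \<noteq> {#}" "count p (Max_mset p) = 1"
  shows Max_mset_lower_max: "Max_mset (lower_max p) = Max_mset p - 1"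
    and raise_max_lower_max: "0 < Max_mset p \<Longrightarrow> raise_max (lower_max p) = p"
proof -
  define M where "M = Max_mset p"
  define r where "r = p - {#M#}"
  have p: "p = add_mset M r"
    using assms(1) by (simp add: M_def r_def)
  have "M \<notin># r"
    using assms(2) by (subst (asm) p) (simp add: M_def not_in_iff)
  have "x \<le> M - 1" if "x \<in># r" for x
  proof -
    have "x \<le> M" "x \<noteq> M"
      using that \<open>M \<notin># r\<close> by (auto simp: M_def r_def dest: in_diffD)
    then show ?thesis by simp
  qed
  then have "Max_mset (lower_max p) = M - 1"
    unfolding lower_max_def M_def[symmetric] r_def[symmetric]
    by (rule Max_mset_add_mset_ge)
  then show "Max_mset (lower_max p) = Max_mset p - 1"
    by (simp add: M_def)
  show "raise_max (lower_max p) = p" if "0 < Max_mset p"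
  proof -
    have "lower_max p = add_mset (M - 1) r"
      by (simp add: lower_max_def M_def r_def)
    moreover have "0 < M"
      using that by (simp add: M_def)
    ultimately show ?thesis
      unfolding raise_max_def \<open>Max_mset (lower_max p) = M - 1\<close> using p by simp
  qed
qed

lemma is_partition_raise_max:
  assumes "is_partition p n" "p \<noteq> {#}"
  shows "is_partition (raise_max p) (Suc n)"
proof -
  have "sum_mset p = Max_mset p + sum_mset (p - {#Max_mset p#})"
    using assms(2) by (simp add: sum_mset.remove)
  with assms(1) show ?thesis
    by (auto simp: is_partition_def raise_max_def dest: in_diffD)
qed

lemma is_partition_lower_max:
  assumes "is_partition p (Suc n)" "1 < Max_mset p"
  shows "is_partition (lower_max p) n"
proof -
  have "p \<noteq> {#}"
    using assms(1) by (auto simp: is_partition_def)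
  then have "sum_mset p = Max_mset p + sum_mset (p - {#Max_mset p#})"
    by (simp add: sum_mset.remove)
  with assms show ?thesis
    by (auto simp: is_partition_def lower_max_def dest: in_diffD)
qed

lemma distinct_even_parts_raise_max:
  assumes "distinct_even_parts p" "p \<noteq> {#}"
  shows "distinct_even_parts (raise_max p)"
proof -
  have "p = add_mset (Max_mset p) (p - {#Max_mset p#})"
    using assms(2) by simp
  with assms(1) have "distinct_even_parts (p - {#Max_mset p#})"
    by (metis distinct_even_parts_add_mset)
  moreover have "Max_mset p + 1 \<notin># p - {#Max_mset p#}"
  proof
    assume "Max_mset p + 1 \<in># p - {#Max_mset p#}"
    then have "Max_mset p + 1 \<le> Max_mset p"
      by (simp add: in_diffD)
    then show False by simp
  qed
  ultimately show ?thesis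
    by (simp add: raise_max_def)
qed

lemma distinct_even_parts_lower_max:
  assumes "distinct_even_parts p" "p \<noteq> {#}" "odd (Max_mset p - 1)"
  shows "distinct_even_parts (lower_max p)"
proof -
  have "p = add_mset (Max_mset p) (p - {#Max_mset p#})"
    using assms(2) by simp
  with assms(1) have "distinct_even_parts (p - {#Max_mset p#})"
    by (metis distinct_even_parts_add_mset)
  with assms(3) show ?thesis
    by (simp add: lower_max_def)
qed

definition de_partitions :: "nat \<Rightarrow> nat multiset set" where
  "de_partitions n = {p. is_partition p n \<and> distinct_even_parts p}"

lemma card_de_partitions: "card (de_partitions n) = no4 n"
proof -
  have "bij_betw glaisher (de_partitions n) {p. is_partition p n \<and> (\<forall>x\<in>#p. \<not> 4 dvd x)}"
  proof (rule bij_betw_imageI)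
    show "inj_on glaisher (de_partitions n)"
      by (rule inj_on_subset[OF inj_on_glaisher]) (auto simp: de_partitions_def)
    show "glaisher ` de_partitions n = {p. is_partition p n \<and> (\<forall>x\<in>#p. \<not> 4 dvd x)}"
    proof (intro equalityI subsetI)
      fix p assume "p \<in> glaisher ` de_partitions n"
      then obtain q where "q \<in> de_partitions n" "p = glaisher q" by blast
      then show "p \<in> {p. is_partition p n \<and> (\<forall>x\<in>#p. \<not> 4 dvd x)}"
        using set_mset_glaisher[of _ q] by (auto simp: de_partitions_def is_partition_def)
    next
      fix p assume p: "p \<in> {p. is_partition p n \<and> (\<forall>x\<in>#p. \<not> 4 dvd x)}"
      then obtain q where q: "distinct_even_parts q" "glaisher q = p"
        using glaisher_surj by blast
      have "0 \<notin># p"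
        using p by (auto simp: is_partition_def)
      then have "0 \<notin># q"
        using q(2) count_glaisher_odd_or_0[of 0 q] by (simp add: not_in_iff)
      with p q have "q \<in> de_partitions n"
        by (auto simp: de_partitions_def is_partition_def intro: Nat.gr0I)
      with q(2) show "p \<in> glaisher ` de_partitions n" by blast
    qed
  qed
  then show ?thesis
    unfolding no4_def by (rule bij_betw_same_card)
qed

lemma card_de_partitions_even_Max:
  "card {p \<in> de_partitions (Suc n). p \<noteq> {#} \<and> even (Max_mset p)} =
   card {p \<in> de_partitions n. p \<noteq> {#} \<and> odd (Max_mset p)}"
  (is "card ?E = card ?D")
proof -
  have lower: "raise_max (lower_max p) = p \<and> lower_max p \<in> ?D" if "p \<in> ?E" for p
  proof -
    from that have p: "is_partition p (Suc n)" "distinct_even_parts p" "p \<noteq> {#}"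
      "even (Max_mset p)"
      by (auto simp: de_partitions_def)
    then have "Max_mset p \<in># p" by simp
    with p have "0 < Max_mset p" "count p (Max_mset p) = 1"
      by (auto simp: is_partition_def count_distinct_even_parts)
    moreover from \<open>0 < Max_mset p\<close> p(4) have "1 < Max_mset p" "odd (Max_mset p - 1)"
      by presburger+
    ultimately show ?thesis
      using p by (simp add: de_partitions_def raise_max_lower_max Max_mset_lower_max
          is_partition_lower_max distinct_even_parts_lower_max)
  qed
  have raise: "lower_max (raise_max p) = p \<and> raise_max p \<in> ?E" if "p \<in> ?D" for p
  proof -
    from that have p: "is_partition p n" "distinct_even_parts p" "p \<noteq> {#}" "odd (Max_mset p)"
      by (auto simp: de_partitions_def)
    then show ?thesis
      by (simp add: de_partitions_def lower_max_raise_max Max_mset_raise_max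
          is_partition_raise_max distinct_even_parts_raise_max)
  qed
  have "bij_betw raise_max ?D ?E"
    by (rule bij_betw_byWitness[where f' = lower_max])
      (use lower raise in \<open>simp_all add: image_subset_iff\<close>)
  then show ?thesis
    by (simp add: bij_betw_same_card)
qed

theorem corollary1:
  fixes n :: nat
  assumes "n > 0"
  shows "DE1 n + DE1 (n - 1) = no4 n"
proof -
  obtain m where n: "n = Suc m"
    using assms gr0_implies_Suc by blast
  have DE1_eq: "DE1 k = card {p \<in> de_partitions k. p \<noteq> {#} \<and> odd (Max_mset p)}" for k
    unfolding DE1_def de_partitions_def distinct_even_parts_def by (simp add: conj_assoc)
  have "de_partitions n =
      {p \<in> de_partitions n. p \<noteq> {#} \<and> odd (Max_mset p)} \<union>
      {p \<in> de_partitions n. p \<noteq> {#} \<and> even (Max_mset p)}"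
    using assms by (auto simp: de_partitions_def is_partition_def)
  moreover have "finite (de_partitions n)"
    using finite_partitions by (simp add: de_partitions_def)
  ultimately have "card (de_partitions n) =
      DE1 n + card {p \<in> de_partitions n. p \<noteq> {#} \<and> even (Max_mset p)}"
    unfolding DE1_eq by (subst card_Un_disjoint[symmetric]) auto
  then show ?thesis
    using card_de_partitions[of n] card_de_partitions_even_Max[of m] DE1_eq[of m] n by simp
qed

end
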